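(* Let $G$ be a graph and $\mathcal{C}$ a min-max clique covering of $G$ that satisfies simple intersection. For a vertex $v\in V(G)$ and two distinct cliques $C_1,C_2\in\mathcal{C}$, we have $v\in C_1\cap C_2$ if and only if $N_G[v]=C_1\cup C_2$.
   Context: A clique covering of a graph is a set of cliques such that every edge lies in at least one of them; $\operatorname{cc}(G)$ is its minimum size. A min-max clique covering is a clique covering of size $\operatorname{cc}(G)$ consisting of maximal cliques; it has simple intersection if no three distinct cliques of it share a vertex. $N_G[v]$ is the closed neighbourhood $\{v\}\cup\{u:\{u,v\}\in E(G)\}$. *)

theory Defs
  imports Main
begin

definition graph :: "'a set \<Rightarrow> 'a set set \<Rightarrow> bool" where
  "graph V E \<longleftrightarrow> finite V \<and> (\<forall>e\<in>E. \<exists>u v. e = {u, v} \<and> u \<noteq> v \<and> u \<in> V \<and> v \<in> V)"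

definition clique :: "'a set \<Rightarrow> 'a set set \<Rightarrow> 'a set \<Rightarrow> bool" where
  "clique V E C \<longleftrightarrow> C \<subseteq> V \<and> (\<forall>u\<in>C. \<forall>v\<in>C. u \<noteq> v \<longrightarrow> {u, v} \<in> E)"

definition maximal_clique :: "'a set \<Rightarrow> 'a set set \<Rightarrow> 'a set \<Rightarrow> bool" where
  "maximal_clique V E C \<longleftrightarrow> clique V E C \<and> (\<forall>D. clique V E D \<and> C \<subseteq> D \<longrightarrow> D = C)"

definition clique_covering :: "'a set \<Rightarrow> 'a set set \<Rightarrow> 'a set set \<Rightarrow> bool" where
  "clique_covering V E \<C> \<longleftrightarrow> (\<forall>C\<in>\<C>. clique V E C) \<and> (\<forall>e\<in>E. \<exists>C\<in>\<C>. e \<subseteq> C)"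

definition cc :: "'a set \<Rightarrow> 'a set set \<Rightarrow> nat" where
  "cc V E = (LEAST k. \<exists>\<C>. clique_covering V E \<C> \<and> finite \<C> \<and> card \<C> = k)"

definition min_max_clique_covering :: "'a set \<Rightarrow> 'a set set \<Rightarrow> 'a set set \<Rightarrow> bool" where
  "min_max_clique_covering V E \<C> \<longleftrightarrow>
     clique_covering V E \<C> \<and> finite \<C> \<and> card \<C> = cc V E \<and> (\<forall>C\<in>\<C>. maximal_clique V E C)"

definition simple_intersection :: "'a set set \<Rightarrow> bool" where
  "simple_intersection \<C> \<longleftrightarrow>
     (\<forall>C1\<in>\<C>. \<forall>C2\<in>\<C>. \<forall>C3\<in>\<C>. C1 \<noteq> C2 \<and> C1 \<noteq> C3 \<and> C2 \<noteq> C3 \<longrightarrow> C1 \<inter> C2 \<inter> C3 = {})"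

definition closed_nbhd :: "'a set \<Rightarrow> 'a set set \<Rightarrow> 'a \<Rightarrow> 'a set" where
  "closed_nbhd V E v = {v} \<union> {u \<in> V. {u, v} \<in> E}"

end

theory Submission
  imports Defs
begin

text \<open>If v lies in two cliques of a covering with simple intersection, every edge at v is
covered by one of those two cliques, so N[v] is their union. Conversely, if N[v] is the union
of two maximal cliques, v is adjacent to every vertex of each of them, and maximality forces v
into both.\<close>

lemma clique_subset_closed_nbhd:
  assumes "clique V E C" and "v \<in> C"
  shows "C \<subseteq> closed_nbhd V E v"
proof
  fix u assume "u \<in> C"
  with assms have "u = v \<or> (u \<in> V \<and> {u, v} \<in> E)"
    unfolding clique_def by blast
  then show "u \<in> closed_nbhd V E v"
    unfolding closed_nbhd_def by auto
qed

lemma maximal_clique_in_closed_nbhd_contains: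
  assumes "maximal_clique V E D" and "v \<in> V" and "D \<subseteq> closed_nbhd V E v"
  shows "v \<in> D"
proof (rule ccontr)
  assume "v \<notin> D"
  with assms(3) have adjacent: "\<forall>u\<in>D. {u, v} \<in> E"
    unfolding closed_nbhd_def by auto
  have "clique V E D"
    using assms(1) unfolding maximal_clique_def by simp
  with adjacent assms(2) have "clique V E (insert v D)"
    unfolding clique_def by (auto simp: insert_commute)
  with assms(1) have "insert v D = D"
    unfolding maximal_clique_def by blast
  with \<open>v \<notin> D\<close> show False by blast
qed

lemma simple_intersection_cliques_through:
  assumes "simple_intersection \<C>" and "C1 \<in> \<C>" "C2 \<in> \<C>" "C1 \<noteq> C2"
    and "v \<in> C1 \<inter> C2" and "C \<in> \<C>" "v \<in> C"
  shows "C = C1 \<or> C = C2"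
  using assms unfolding simple_intersection_def by blast

lemma closed_nbhd_subset_covering_cliques:
  assumes "clique_covering V E \<C>" and "simple_intersection \<C>"
    and "C1 \<in> \<C>" "C2 \<in> \<C>" "C1 \<noteq> C2" and "v \<in> C1 \<inter> C2"
  shows "closed_nbhd V E v \<subseteq> C1 \<union> C2"
proof
  fix u assume u: "u \<in> closed_nbhd V E v"
  show "u \<in> C1 \<union> C2"
  proof (cases "u = v")
    case True
    with assms(6) show ?thesis by blast
  next
    case False
    with u have "{u, v} \<in> E"
      unfolding closed_nbhd_def by auto
    with assms(1) obtain C where "C \<in> \<C>" "{u, v} \<subseteq> C"
      unfolding clique_covering_def by blast
    with simple_intersection_cliques_through[OF assms(2-6)] show ?thesis
      by blast
  qed
qed

theorem mainTheorem16:
  fixes V :: "'a set" and E :: "'a set set" and \<C> :: "'a set set"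
  assumes "graph V E"
    and "min_max_clique_covering V E \<C>"
    and "simple_intersection \<C>"
    and "v \<in> V"
    and "C1 \<in> \<C>" and "C2 \<in> \<C>" and "C1 \<noteq> C2"
  shows "v \<in> C1 \<inter> C2 \<longleftrightarrow> closed_nbhd V E v = C1 \<union> C2"
proof -
  have covering: "clique_covering V E \<C>"
    and maximal1: "maximal_clique V E C1" and maximal2: "maximal_clique V E C2"
    using assms(2,5,6) unfolding min_max_clique_covering_def by auto
  then have "clique V E C1" "clique V E C2"
    unfolding maximal_clique_def by auto
  show ?thesis
  proof
    assume v: "v \<in> C1 \<inter> C2"
    show "closed_nbhd V E v = C1 \<union> C2"
      using clique_subset_closed_nbhd[OF \<open>clique V E C1\<close>] clique_subset_closed_nbhd[OF \<open>clique V E C2\<close>]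
        closed_nbhd_subset_covering_cliques[OF covering assms(3,5-7) v] v
      by blast
  next
    assume "closed_nbhd V E v = C1 \<union> C2"
    then show "v \<in> C1 \<inter> C2"
      using maximal_clique_in_closed_nbhd_contains[OF maximal1 assms(4)]
        maximal_clique_in_closed_nbhd_contains[OF maximal2 assms(4)]
      by blast
  qed
qed

end
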